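(* Fix $b>0$, $c>0$ and $0<\theta<c$, and let the parameter $a\in\mathbb R$ vary. Consider the two-player complete-information contest with efforts $x,y\ge 0$, payoffs $P(x,y)-\theta x$ and $1-P(x,y)-\theta y$, where $P(x,y)=\tfrac12+(x-y)\bigl(c-b(x+y)+axy\bigr)$ (no truncation). Define the pure-equilibrium region $\{a: b^2\ge a(c-\theta)\}$ (equivalently $a=0$ or $\zeta(a):=\frac{b^2-a(c-\theta)}{a^2}\ge 0$) and the mixed-equilibrium region $\{a: b^2<a(c-\theta)\}$ (equivalently $\zeta(a)<0$). Define equilibrium effort $e(a)$ by: $e(a)=\frac{b-\sqrt{b^2-a(c-\theta)}}{a}$ for $a\neq0$ in the pure region, $e(0)=\frac{c-\theta}{2b}$, and $e(a)=b/a$ on the mixed region (the common mean effort of every mixed equilibrium there). Then $e$ is increasing on the pure-equilibrium region and decreasing on the mixed-equilibrium region. Hence equilibrium effort is maximized at the boundary $\zeta=0$, i.e. at $a$ with $b^2=a(c-\theta)$.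
   Context: On the pure region the unique equilibrium of this contest is the symmetric pure profile with effort $e(a)$ (for $a=0$ each player has the dominant strategy $(c-\theta)/(2b)$); on the mixed region every mixed equilibrium has both players' mean effort equal to $b/a$. *)

theory Defs
  imports Complex_Main
begin

definition win_prob :: "real \<Rightarrow> real \<Rightarrow> real \<Rightarrow> real \<Rightarrow> real \<Rightarrow> real" where
  "win_prob a b c x y = 1/2 + (x - y) * (c - b * (x + y) + a * x * y)"

definition zeta :: "real \<Rightarrow> real \<Rightarrow> real \<Rightarrow> real \<Rightarrow> real" where
  "zeta b c \<theta> a = (b^2 - a * (c - \<theta>)) / a^2"

definition pure_region :: "real \<Rightarrow> real \<Rightarrow> real \<Rightarrow> real set" where
  "pure_region b c \<theta> = {a. b^2 \<ge> a * (c - \<theta>)}"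

definition mixed_region :: "real \<Rightarrow> real \<Rightarrow> real \<Rightarrow> real set" where
  "mixed_region b c \<theta> = {a. b^2 < a * (c - \<theta>)}"

definition eq_effort :: "real \<Rightarrow> real \<Rightarrow> real \<Rightarrow> real \<Rightarrow> real" where
  "eq_effort b c \<theta> a =
     (if a = 0 then (c - \<theta>) / (2 * b)
      else if b^2 \<ge> a * (c - \<theta>) then (b - sqrt (b^2 - a * (c - \<theta>))) / a
      else b / a)"

end

theory Submission
  imports Defs
begin

text \<open>Rationalising the numerator, the pure-region effort is
  \<open>(c - \<theta>) / (b + sqrt (b\<^sup>2 - a (c - \<theta>)))\<close>, which also covers \<open>a = 0\<close> and visibly
  increases with \<open>a\<close>.
  Both expressions are bounded by \<open>(c - \<theta>) / b\<close>, the common value at the boundary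
  \<open>b\<^sup>2 = a (c - \<theta>)\<close>.\<close>

lemma eq_effort_pure_region:
  assumes "b > 0" and "a \<in> pure_region b c \<theta>"
  shows "eq_effort b c \<theta> a = (c - \<theta>) / (b + sqrt (b\<^sup>2 - a * (c - \<theta>)))"
proof (cases "a = 0")
  case True
  then show ?thesis using \<open>b > 0\<close> by (simp add: eq_effort_def)
next
  case False
  define s where "s = sqrt (b\<^sup>2 - a * (c - \<theta>))"
  have discr: "b\<^sup>2 \<ge> a * (c - \<theta>)" using assms(2) by (simp add: pure_region_def)
  then have "s\<^sup>2 = b\<^sup>2 - a * (c - \<theta>)" by (simp add: s_def)
  then have conj_prod: "(b - s) * (b + s) = a * (c - \<theta>)" by (simp add: power2_eq_square algebra_simps)
  have "b + s > 0" using \<open>b > 0\<close> discr by (simp add: s_def add_pos_nonneg)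
  then have "(b - s) / a = (c - \<theta>) / (b + s)"
    using False conj_prod by (simp add: frac_eq_eq mult.commute)
  then show ?thesis using False discr by (simp add: eq_effort_def s_def)
qed

lemma eq_effort_mixed_region:
  assumes "a \<in> mixed_region b c \<theta>"
  shows "eq_effort b c \<theta> a = b / a"
proof -
  have "b\<^sup>2 < a * (c - \<theta>)" using assms by (simp add: mixed_region_def)
  moreover from this have "a \<noteq> 0" by auto
  ultimately show ?thesis by (simp add: eq_effort_def)
qed

lemma mixed_region_pos:
  assumes "\<theta> < c" and "a \<in> mixed_region b c \<theta>"
  shows "a > 0"
proof -
  have "b\<^sup>2 < a * (c - \<theta>)" using assms(2) by (simp add: mixed_region_def)
  then have "0 < a * (c - \<theta>)" using zero_le_power2[of b] by linarith
  then show ?thesis using \<open>\<theta> < c\<close> by (simp add: zero_less_mult_iff)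
qed

lemma eq_effort_strict_mono_pure_region:
  assumes "b > 0" and "\<theta> < c"
    and "a1 \<in> pure_region b c \<theta>" and "a2 \<in> pure_region b c \<theta>" and "a1 < a2"
  shows "eq_effort b c \<theta> a1 < eq_effort b c \<theta> a2"
proof -
  have "b\<^sup>2 \<ge> a2 * (c - \<theta>)" using assms(4) by (simp add: pure_region_def)
  moreover have "a1 * (c - \<theta>) < a2 * (c - \<theta>)" using assms(2,5) by simp
  ultimately have "b + sqrt (b\<^sup>2 - a2 * (c - \<theta>)) < b + sqrt (b\<^sup>2 - a1 * (c - \<theta>))"
    and "0 < b + sqrt (b\<^sup>2 - a2 * (c - \<theta>))"
    using \<open>b > 0\<close> by (simp_all add: add_pos_nonneg)
  then have "(c - \<theta>) / (b + sqrt (b\<^sup>2 - a1 * (c - \<theta>)))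
      < (c - \<theta>) / (b + sqrt (b\<^sup>2 - a2 * (c - \<theta>)))"
    using \<open>\<theta> < c\<close> by (intro divide_strict_left_mono) (auto intro: mult_pos_pos less_trans)
  then show ?thesis using assms by (simp add: eq_effort_pure_region)
qed

lemma eq_effort_strict_antimono_mixed_region:
  assumes "b > 0" and "\<theta> < c"
    and "a1 \<in> mixed_region b c \<theta>" and "a2 \<in> mixed_region b c \<theta>" and "a1 < a2"
  shows "eq_effort b c \<theta> a1 > eq_effort b c \<theta> a2"
  using assms mixed_region_pos[OF \<open>\<theta> < c\<close> \<open>a1 \<in> mixed_region b c \<theta>\<close>]
  by (simp add: eq_effort_mixed_region divide_strict_left_mono)

lemma eq_effort_le:
  assumes "b > 0" and "\<theta> < c"
  shows "eq_effort b c \<theta> a \<le> (c - \<theta>) / b"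
proof (cases "a \<in> pure_region b c \<theta>")
  case True
  have "b \<le> b + sqrt (b\<^sup>2 - a * (c - \<theta>))" using True by (simp add: pure_region_def)
  then have "(c - \<theta>) / (b + sqrt (b\<^sup>2 - a * (c - \<theta>))) \<le> (c - \<theta>) / b"
    using assms by (intro divide_left_mono) (auto intro!: mult_pos_pos add_pos_nonneg)
  then show ?thesis using True assms by (simp add: eq_effort_pure_region)
next
  case False
  then have mixed: "a \<in> mixed_region b c \<theta>" by (simp add: pure_region_def mixed_region_def)
  then have "a > 0" and "b * b < a * (c - \<theta>)"
    using mixed_region_pos[OF \<open>\<theta> < c\<close>] by (auto simp: mixed_region_def power2_eq_square)
  then show ?thesis
    using mixed \<open>b > 0\<close> by (simp add: eq_effort_mixed_region frac_le_eq divide_simps mult.commute)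
qed

lemma eq_effort_boundary:
  assumes "b > 0" and "b\<^sup>2 = a * (c - \<theta>)"
  shows "eq_effort b c \<theta> a = (c - \<theta>) / b"
  using assms by (simp add: eq_effort_pure_region pure_region_def)

theorem theorem2:
  fixes b c \<theta> :: real
  assumes "b > 0" and "c > 0" and "0 < \<theta>" and "\<theta> < c"
  shows "(\<forall>a1\<in>pure_region b c \<theta>. \<forall>a2\<in>pure_region b c \<theta>.
            a1 < a2 \<longrightarrow> eq_effort b c \<theta> a1 < eq_effort b c \<theta> a2)
       \<and> (\<forall>a1\<in>mixed_region b c \<theta>. \<forall>a2\<in>mixed_region b c \<theta>.
            a1 < a2 \<longrightarrow> eq_effort b c \<theta> a1 > eq_effort b c \<theta> a2)
       \<and> (\<forall>a0. b^2 = a0 * (c - \<theta>) \<longrightarrow> (\<forall>a. eq_effort b c \<theta> a \<le> eq_effort b c \<theta> a0))"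
  using eq_effort_strict_mono_pure_region[OF \<open>b > 0\<close> \<open>\<theta> < c\<close>]
    eq_effort_strict_antimono_mixed_region[OF \<open>b > 0\<close> \<open>\<theta> < c\<close>]
    eq_effort_le[OF \<open>b > 0\<close> \<open>\<theta> < c\<close>] eq_effort_boundary[OF \<open>b > 0\<close>]
  by simp

end
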